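(* Let $1\le k\le n$ be integers, let $M\in\mathbb{R}^{2n\times 2n}$ be symmetric positive definite, let $N=\operatorname{diag}(\nu_1,\ldots,\nu_k)$ with $0<\nu_1<\cdots<\nu_k$, and let $\tilde N=\operatorname{diag}(N,N)$. Consider the problem of minimizing $f(X)=\operatorname{tr}(\tilde N X^TMX)$ over $X\in\mathbb{R}^{2n\times 2k}$ subject to $X^TJ_{2n}X=J_{2k}$. If $X_*$ is a critical point of this problem, then for every $K\in\mathbb{R}^{2k\times 2k}$ with $K^TJ_{2k}K=J_{2k}$ and $K^T\tilde N K=\tilde N$, the matrix $X_*K$ is also a critical point of this problem.
   Context: $J_{2m}=\begin{bmatrix}0 & I_m\\ -I_m & 0\end{bmatrix}$. A point $X_*\in\mathbb{R}^{2n\times 2k}$ is a critical point of the problem if $X_*^TJ_{2n}X_*=J_{2k}$ and there exists a skew-symmetric matrix $L_*\in\mathbb{R}^{2k\times 2k}$ (Lagrange multiplier) such that $MX_*\tilde N=J_{2n}X_*L_*$. *)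

theory Defs
  imports "Jordan_Normal_Form.Matrix"
begin

definition Jsym :: "nat \<Rightarrow> real mat" where
  "Jsym m = four_block_mat (0\<^sub>m m m) (1\<^sub>m m) (- 1\<^sub>m m) (0\<^sub>m m m)"

definition sym_pos_def_mat :: "nat \<Rightarrow> real mat \<Rightarrow> bool" where
  "sym_pos_def_mat d M \<longleftrightarrow> M \<in> carrier_mat d d \<and> M\<^sup>T = M \<and>
     (\<forall>x \<in> carrier_vec d. x \<noteq> 0\<^sub>v d \<longrightarrow> x \<bullet> (M *\<^sub>v x) > 0)"

definition diag_of :: "nat \<Rightarrow> (nat \<Rightarrow> real) \<Rightarrow> real mat" where
  "diag_of k \<nu> = mat k k (\<lambda>(i, j). if i = j then \<nu> i else 0)"

text \<open>Critical point of  min tr(Nt X^T M X)  s.t.  X^T J_{2n} X = J_{2k}.\<close>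
definition critical_point :: "nat \<Rightarrow> nat \<Rightarrow> real mat \<Rightarrow> real mat \<Rightarrow> real mat \<Rightarrow> bool" where
  "critical_point n k M Nt X \<longleftrightarrow>
     X \<in> carrier_mat (2*n) (2*k) \<and> X\<^sup>T * Jsym n * X = Jsym k \<and>
     (\<exists>L \<in> carrier_mat (2*k) (2*k). L\<^sup>T = - L \<and> M * X * Nt = Jsym n * X * L)"

end

theory Submission
  imports Defs "Jordan_Normal_Form.Determinant"
begin

(* Write J = Jsym k and N = diag(D, D) with D = diag(\<nu>). A symplectic K is invertible with
   inverse -J K\<^sup>T J, so K\<^sup>T N K = N says that K commutes with J N. As J commutes with N,
   K commutes with (J N)\<^sup>2 = -N\<^sup>2, hence with N, because the \<nu>_i are positive; cancelling the
   invertible N then gives K J = J K, and K\<^sup>T J K = J becomes K\<^sup>T K = 1. An orthogonal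
   symplectic K commuting with N maps a critical point X with multiplier L to the critical
   point X K with the skew-symmetric multiplier K\<^sup>T L K. *)

lemma diag_of_carrier [simp]: "diag_of m d \<in> carrier_mat m m"
  and dim_row_diag_of [simp]: "dim_row (diag_of m d) = m"
  and dim_col_diag_of [simp]: "dim_col (diag_of m d) = m"
  by (simp_all add: diag_of_def)

lemma index_mult_diag_of_right:
  assumes "A \<in> carrier_mat r m" "i < r" "j < m"
  shows "(A * diag_of m d) $$ (i, j) = A $$ (i, j) * d j"
proof -
  have "(A * diag_of m d) $$ (i, j) = (\<Sum>l\<in>{0..<m}. A $$ (i, l) * (if l = j then d l else 0))"
    using assms by (simp add: diag_of_def scalar_prod_def)
  also have "\<dots> = A $$ (i, j) * d j"
    using assms(3) by (simp add: if_distrib[where f = "\<lambda>x. _ * x"] sum.delta' cong: if_cong)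
  finally show ?thesis .
qed

lemma index_mult_diag_of_left:
  assumes "A \<in> carrier_mat m c" "i < m" "j < c"
  shows "(diag_of m d * A) $$ (i, j) = d i * A $$ (i, j)"
proof -
  have "(diag_of m d * A) $$ (i, j) = (\<Sum>l\<in>{0..<m}. (if i = l then d i else 0) * A $$ (l, j))"
    using assms by (simp add: diag_of_def scalar_prod_def)
  also have "\<dots> = d i * A $$ (i, j)"
    using assms(2) by (simp add: if_distrib[where f = "\<lambda>x. x * _"] sum.delta cong: if_cong)
  finally show ?thesis .
qed

lemma diag_of_mult_diag_of: "diag_of m a * diag_of m b = diag_of m (\<lambda>i. a i * b i)"
proof (rule eq_matI)
  fix i j assume "i < dim_row (diag_of m (\<lambda>i. a i * b i))" "j < dim_col (diag_of m (\<lambda>i. a i * b i))"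
  then show "(diag_of m a * diag_of m b) $$ (i, j) = diag_of m (\<lambda>i. a i * b i) $$ (i, j)"
    by (simp add: index_mult_diag_of_left[OF diag_of_carrier] del: index_mult_mat) (simp add: diag_of_def)
qed simp_all

lemma diag_of_mult_diag_of_inverse:
  assumes "\<forall>i<m. a i \<noteq> 0"
  shows "diag_of m a * diag_of m (\<lambda>i. 1 / a i) = 1\<^sub>m m"
  unfolding diag_of_mult_diag_of using assms by (intro eq_matI) (auto simp: diag_of_def)

lemma four_block_diag_of:
  "four_block_mat (diag_of k d) (0\<^sub>m k k) (0\<^sub>m k k) (diag_of k d) = diag_of (2 * k) (\<lambda>i. d (i mod k))"
  by (rule eq_matI) (auto simp: index_mat_four_block diag_of_def le_mod_geq)

lemma commute_diag_of_if_commute_square: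
  fixes A :: "real mat"
  assumes A: "A \<in> carrier_mat m m" and nonneg: "\<forall>i<m. 0 \<le> d i"
    and comm: "A * diag_of m (\<lambda>i. d i ^ 2) = diag_of m (\<lambda>i. d i ^ 2) * A"
  shows "A * diag_of m d = diag_of m d * A"
proof (rule eq_matI)
  fix i j assume "i < dim_row (diag_of m d * A)" "j < dim_col (diag_of m d * A)"
  then have ij: "i < m" "j < m" using A by simp_all
  have "A $$ (i, j) * d j ^ 2 = d i ^ 2 * A $$ (i, j)"
    using arg_cong[OF comm, of "\<lambda>B. B $$ (i, j)"] A ij
    by (simp add: index_mult_diag_of_left index_mult_diag_of_right del: index_mult_mat)
  then have "A $$ (i, j) = 0 \<or> d j = d i"
    using nonneg ij by (auto simp: power2_eq_iff_nonneg)
  then show "(A * diag_of m d) $$ (i, j) = (diag_of m d * A) $$ (i, j)"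
    using A ij by (auto simp: index_mult_diag_of_left index_mult_diag_of_right simp del: index_mult_mat)
qed (use A in auto)

lemma assoc_mult_mat_dim:
  "dim_col A = dim_row B \<Longrightarrow> dim_col B = dim_row C \<Longrightarrow> A * B * C = A * (B * (C :: 'a :: semiring_0 mat))"
  by (rule assoc_mult_mat[of A "dim_row A" "dim_col A" B "dim_col B" C "dim_col C"]) auto

lemma mult_commute_square_mat:
  fixes A B :: "'a::semiring_0 mat"
  assumes A: "A \<in> carrier_mat n n" and B: "B \<in> carrier_mat n n" and AB: "A * B = B * A"
  shows "A * (B * B) = B * B * A"
proof -
  have "A * (B * B) = B * A * B"
    using assoc_mult_mat[OF A B B] AB by simp
  also have "\<dots> = B * B * A"
    using assoc_mult_mat[OF B A B] assoc_mult_mat[OF B B A] AB by simp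
  finally show ?thesis .
qed

lemma Jsym_carrier [simp]: "Jsym m \<in> carrier_mat (2 * m) (2 * m)"
  unfolding Jsym_def mult_2 by (rule four_block_carrier_mat) auto

lemma dim_row_Jsym [simp]: "dim_row (Jsym m) = 2 * m"
  and dim_col_Jsym [simp]: "dim_col (Jsym m) = 2 * m"
  using Jsym_carrier by blast+

lemma Jsym_mult_Jsym: "Jsym m * Jsym m = - 1\<^sub>m (2 * m)"
proof -
  have "Jsym m * Jsym m = four_block_mat (- 1\<^sub>m m) (0\<^sub>m m m) (0\<^sub>m m m) (- 1\<^sub>m m)"
    unfolding Jsym_def by (subst mult_four_block_mat[of _ m m _ m _ m _ _ m _ m]) auto
  also have "\<dots> = - 1\<^sub>m (2 * m)"
    by (rule eq_matI) (auto simp: index_mat_four_block)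
  finally show ?thesis .
qed

lemma Jsym_commute_four_block_diag:
  assumes "D \<in> carrier_mat k k"
  shows "Jsym k * four_block_mat D (0\<^sub>m k k) (0\<^sub>m k k) D = four_block_mat D (0\<^sub>m k k) (0\<^sub>m k k) D * Jsym k"
  unfolding Jsym_def using assms
  by (simp add: mult_four_block_mat[of _ k k _ k _ k _ _ k _ k]) (rule eq_matI; simp)

lemma symplectic_inverse:
  assumes K: "K \<in> carrier_mat (2 * k) (2 * k)" and KJ: "K\<^sup>T * Jsym k * K = Jsym k"
  shows "- (Jsym k * K\<^sup>T * Jsym k) * K = 1\<^sub>m (2 * k)"
    and "K * - (Jsym k * K\<^sup>T * Jsym k) = 1\<^sub>m (2 * k)"
proof -
  let ?J = "Jsym k"
  have "- (?J * K\<^sup>T * ?J) * K = - (?J * (K\<^sup>T * ?J * K))"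
    using K by (simp add: assoc_mult_mat_dim)
  also have "\<dots> = 1\<^sub>m (2 * k)"
    using KJ by (simp add: Jsym_mult_Jsym)
  finally show left: "- (?J * K\<^sup>T * ?J) * K = 1\<^sub>m (2 * k)" .
  show "K * - (?J * K\<^sup>T * ?J) = 1\<^sub>m (2 * k)"
    by (rule mat_mult_left_right_inverse[OF _ K left]) (use K in auto)
qed

lemma symplectic_congruence_commute_Jsym_mult:
  assumes K: "K \<in> carrier_mat (2 * k) (2 * k)" and KJ: "K\<^sup>T * Jsym k * K = Jsym k"
    and N: "N \<in> carrier_mat (2 * k) (2 * k)" and KN: "K\<^sup>T * N * K = N"
  shows "K * (Jsym k * N) = Jsym k * N * K"
proof -
  let ?J = "Jsym k" and ?G = "- (Jsym k * K\<^sup>T * Jsym k)"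
  have "?G * (?J * N * K) = - (?J * K\<^sup>T * (?J * ?J) * N * K)"
    using K N by (simp add: assoc_mult_mat_dim)
  also have "\<dots> = ?J * N"
    using K N KN by (simp add: Jsym_mult_Jsym assoc_mult_mat_dim)
  finally have G_JNK: "?G * (?J * N * K) = ?J * N" .
  have "K * (?J * N) = K * (?G * (?J * N * K))"
    by (simp only: G_JNK)
  also have "\<dots> = K * ?G * (?J * N * K)"
    using K N by (simp add: assoc_mult_mat_dim)
  also have "\<dots> = ?J * N * K"
    using K N by (simp add: symplectic_inverse[OF K KJ])
  finally show ?thesis .
qed

lemma orthogonal_if_symplectic_commute_Jsym:
  assumes K: "K \<in> carrier_mat (2 * k) (2 * k)" and KJ: "K\<^sup>T * Jsym k * K = Jsym k"
    and comm: "K * Jsym k = Jsym k * K"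
  shows "K * K\<^sup>T = 1\<^sub>m (2 * k)"
proof -
  let ?J = "Jsym k"
  have "K\<^sup>T * K = - (K\<^sup>T * (K * ?J) * ?J)"
    using K by (simp add: Jsym_mult_Jsym assoc_mult_mat_dim)
  also have "\<dots> = - (?J * ?J)"
    using K KJ by (simp add: comm assoc_mult_mat_dim)
  also have "\<dots> = 1\<^sub>m (2 * k)"
    by (simp add: Jsym_mult_Jsym)
  finally have "K\<^sup>T * K = 1\<^sub>m (2 * k)" .
  then show ?thesis
    using mat_mult_left_right_inverse[OF _ K] K by simp
qed

lemma symplectic_preserving_block_diag_commute_orthogonal:
  fixes k :: nat and \<nu> :: "nat \<Rightarrow> real" and K :: "real mat"
  defines "Nt \<equiv> four_block_mat (diag_of k \<nu>) (0\<^sub>m k k) (0\<^sub>m k k) (diag_of k \<nu>)"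
  assumes pos: "\<forall>i<k. 0 < \<nu> i" and K: "K \<in> carrier_mat (2 * k) (2 * k)"
    and KJ: "K\<^sup>T * Jsym k * K = Jsym k" and KN: "K\<^sup>T * Nt * K = Nt"
  shows "K * Nt = Nt * K" and "K * K\<^sup>T = 1\<^sub>m (2 * k)"
proof -
  let ?J = "Jsym k"
  define \<mu> where "\<mu> i = \<nu> (i mod k)" for i
  have Nt_diag: "Nt = diag_of (2 * k) \<mu>"
    unfolding Nt_def \<mu>_def by (rule four_block_diag_of)
  have Nt: "Nt \<in> carrier_mat (2 * k) (2 * k)"
    by (simp add: Nt_diag)
  have \<mu>_pos: "\<forall>i<2 * k. 0 < \<mu> i"
    using pos by (auto simp: \<mu>_def)
  have J_Nt: "?J * Nt = Nt * ?J"
    unfolding Nt_def by (rule Jsym_commute_four_block_diag) simp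
  have K_JNt: "K * (?J * Nt) = ?J * Nt * K"
    by (rule symplectic_congruence_commute_Jsym_mult[OF K KJ Nt KN])
  have "?J * Nt * (?J * Nt) = ?J * (Nt * ?J) * Nt"
    using Nt by (simp add: assoc_mult_mat_dim)
  also have "\<dots> = ?J * ?J * (Nt * Nt)"
    using Nt by (simp add: assoc_mult_mat_dim flip: J_Nt)
  finally have JNt_square: "?J * Nt * (?J * Nt) = - (Nt * Nt)"
    using Nt by (simp add: Jsym_mult_Jsym)
  have "K * (Nt * Nt) = Nt * Nt * K"
    using mult_commute_square_mat[OF K mult_carrier_mat[OF Jsym_carrier Nt] K_JNt] K Nt
    by (simp add: JNt_square)
  then have "K * diag_of (2 * k) (\<lambda>i. \<mu> i ^ 2) = diag_of (2 * k) (\<lambda>i. \<mu> i ^ 2) * K"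
    by (simp add: Nt_diag diag_of_mult_diag_of power2_eq_square)
  moreover have "\<forall>i<2 * k. 0 \<le> \<mu> i"
    using \<mu>_pos by (simp add: less_imp_le)
  ultimately show K_Nt: "K * Nt = Nt * K"
    unfolding Nt_diag by (rule commute_diag_of_if_commute_square[OF K, rotated])
  define Ni where "Ni = diag_of (2 * k) (\<lambda>i. 1 / \<mu> i)"
  have Nt_Ni: "Nt * Ni = 1\<^sub>m (2 * k)"
    unfolding Nt_diag Ni_def using \<mu>_pos by (intro diag_of_mult_diag_of_inverse) auto
  have "K * ?J * Nt = ?J * K * Nt"
    using K Nt K_JNt by (simp add: assoc_mult_mat_dim K_Nt)
  then have "K * ?J * Nt * Ni = ?J * K * Nt * Ni"
    by simp
  then have "K * ?J * (Nt * Ni) = ?J * K * (Nt * Ni)"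
    using K Nt by (simp add: assoc_mult_mat_dim Ni_def)
  then have "K * ?J = ?J * K"
    using K by (simp add: Nt_Ni)
  then show "K * K\<^sup>T = 1\<^sub>m (2 * k)"
    by (rule orthogonal_if_symplectic_commute_Jsym[OF K KJ])
qed

lemma critical_point_mult_orthogonal:
  assumes crit: "critical_point n k M Nt X" and M: "M \<in> carrier_mat (2 * n) (2 * n)"
    and Nt: "Nt \<in> carrier_mat (2 * k) (2 * k)" and K: "K \<in> carrier_mat (2 * k) (2 * k)"
    and KJ: "K\<^sup>T * Jsym k * K = Jsym k" and K_Nt: "K * Nt = Nt * K"
    and orth: "K * K\<^sup>T = 1\<^sub>m (2 * k)"
  shows "critical_point n k M Nt (X * K)"
proof -
  obtain L where X: "X \<in> carrier_mat (2 * n) (2 * k)" and XJX: "X\<^sup>T * Jsym n * X = Jsym k"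
    and L: "L \<in> carrier_mat (2 * k) (2 * k)" and skew: "L\<^sup>T = - L"
    and stationary: "M * X * Nt = Jsym n * X * L"
    using crit unfolding critical_point_def by blast
  have XK_T: "(X * K)\<^sup>T = K\<^sup>T * X\<^sup>T"
    by (rule transpose_mult[OF X K])
  have "(X * K)\<^sup>T * Jsym n * (X * K) = K\<^sup>T * (X\<^sup>T * Jsym n * X) * K"
    unfolding XK_T using X K by (simp add: assoc_mult_mat_dim)
  then have symplectic: "(X * K)\<^sup>T * Jsym n * (X * K) = Jsym k"
    by (simp add: XJX KJ)
  have KTL: "K\<^sup>T * L \<in> carrier_mat (2 * k) (2 * k)"
    using K L by (intro mult_carrier_mat[of _ _ "2 * k"]) auto
  have "(K\<^sup>T * L * K)\<^sup>T = K\<^sup>T * (K\<^sup>T * L)\<^sup>T"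
    by (rule transpose_mult[OF KTL K])
  also have "(K\<^sup>T * L)\<^sup>T = L\<^sup>T * K"
    using transpose_mult[of "K\<^sup>T" "2 * k" "2 * k" L "2 * k"] K L by simp
  finally have "(K\<^sup>T * L * K)\<^sup>T = K\<^sup>T * L\<^sup>T * K"
    using K L by (simp add: assoc_mult_mat_dim)
  then have skew': "(K\<^sup>T * L * K)\<^sup>T = - (K\<^sup>T * L * K)"
    using K L by (simp add: skew)
  have "M * (X * K) * Nt = M * X * Nt * K"
    using M X K Nt by (simp add: assoc_mult_mat_dim K_Nt)
  also have "\<dots> = Jsym n * X * (K * K\<^sup>T) * L * K"
    using X K L by (simp add: stationary orth)
  also have "\<dots> = Jsym n * (X * K) * (K\<^sup>T * L * K)"
    using X K L by (simp add: assoc_mult_mat_dim)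
  finally have "M * (X * K) * Nt = Jsym n * (X * K) * (K\<^sup>T * L * K)" .
  moreover have "K\<^sup>T * L * K \<in> carrier_mat (2 * k) (2 * k)"
    using KTL K by simp
  ultimately show ?thesis
    unfolding critical_point_def using symplectic skew' mult_carrier_mat[OF X K]
    by (intro conjI bexI[where x = "K\<^sup>T * L * K"])
qed

theorem proposition3p3:
  fixes n k :: nat and \<nu> :: "nat \<Rightarrow> real" and M X K :: "real mat"
  assumes "1 \<le> k" and "k \<le> n"
    and "sym_pos_def_mat (2*n) M"
    and "\<forall>i<k. 0 < \<nu> i"
    and "\<forall>i j. i < j \<and> j < k \<longrightarrow> \<nu> i < \<nu> j"
    and "critical_point n k M
           (four_block_mat (diag_of k \<nu>) (0\<^sub>m k k) (0\<^sub>m k k) (diag_of k \<nu>)) X"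
    and "K \<in> carrier_mat (2*k) (2*k)"
    and "K\<^sup>T * Jsym k * K = Jsym k"
    and "K\<^sup>T * four_block_mat (diag_of k \<nu>) (0\<^sub>m k k) (0\<^sub>m k k) (diag_of k \<nu>) * K
           = four_block_mat (diag_of k \<nu>) (0\<^sub>m k k) (0\<^sub>m k k) (diag_of k \<nu>)"
  shows "critical_point n k M
           (four_block_mat (diag_of k \<nu>) (0\<^sub>m k k) (0\<^sub>m k k) (diag_of k \<nu>)) (X * K)"
proof (rule critical_point_mult_orthogonal[OF assms(6) _ _ assms(7,8)])
  show "M \<in> carrier_mat (2 * n) (2 * n)"
    using assms(3) unfolding sym_pos_def_mat_def by blast
  show "four_block_mat (diag_of k \<nu>) (0\<^sub>m k k) (0\<^sub>m k k) (diag_of k \<nu>) \<in> carrier_mat (2 * k) (2 * k)"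
    by (simp add: four_block_diag_of)
  show "K * four_block_mat (diag_of k \<nu>) (0\<^sub>m k k) (0\<^sub>m k k) (diag_of k \<nu>)
      = four_block_mat (diag_of k \<nu>) (0\<^sub>m k k) (0\<^sub>m k k) (diag_of k \<nu>) * K"
    and "K * K\<^sup>T = 1\<^sub>m (2 * k)"
    using symplectic_preserving_block_diag_commute_orthogonal[OF assms(4,7,8,9)] by blast+
qed

end
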